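(* Let $p,q$ be positive integers with $\gcd(p,q)=2$. On the square billiard, consider the billiard trajectory generated by $\langle P_0,\alpha_0\rangle$ with $\tan(\alpha_0)=p/q$ fixed and $P_0\in[0,1)$. Then: (i) if $P_0=\frac{2\ell}{p}$ for some $\ell\in\{0,1,\dots,\frac{p}{2}-1\}$, the trajectory is a singular orbit, and it lies on a generalised diagonal of length $\frac{p+q}{2}-2$ having exactly $\frac{p}{2}-1$ collision points on the sides $\mathsf{AB}$ or $\mathsf{CD}$ and exactly $\frac{q}{2}-1$ collision points on the sides $\mathsf{BC}$ or $\mathsf{DA}$; (ii) otherwise the trajectory is a periodic orbit of period $p+q$ belonging to the class $\mathcal{C}_{p+q}(p)$.
   Context: Square billiard: unit square with vertices $\mathsf{A}=(0,0),\mathsf{B}=(1,0),\mathsf{C}=(1,1),\mathsf{D}=(0,1)$; a point moves in straight lines, reflecting elastically at the sides; a trajectory reaching a vertex terminates (singular orbit). A pair $\langle P_0,\alpha_0\rangle$ generates the trajectory with a collision at $(P_0,0)$ on $\mathsf{AB}$ whose outgoing segment makes angle $\alpha_0\in(0,\pi/2]$ with $\mathsf{AB}$ (direction of motion not distinguished; for $P_0=0$ the trajectory starts at vertex $\mathsf{A}$). Period of a periodic orbit = number of distinct collision points. The class $\mathcal{C}_K(p)$ consists of all period-$K$ orbits with exactly $p$ distinct collision points on $\mathsf{AB}$ or $\mathsf{CD}$ (and $K-p$ on $\mathsf{BC}$ or $\mathsf{DA}$). A generalised diagonal is a singular orbit starting at a vertex; its length is the number of its non-vertex collision points. *)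

theory Defs
  imports Complex_Main
begin

text \<open>Square billiard on the unit square with vertices A=(0,0), B=(1,0), C=(1,1), D=(0,1).
  A billiard state is a pair (collision point, velocity).\<close>

type_synonym bstate = "(real \<times> real) \<times> (real \<times> real)"

definition sq_vertices :: "(real \<times> real) set" where
  "sq_vertices = {(0,0), (1,0), (1,1), (0,1)}"

definition hit_time :: "real \<Rightarrow> real \<Rightarrow> real option" where
  "hit_time c v = (if v > 0 then Some ((1 - c) / v) else if v < 0 then Some (- c / v) else None)"

definition flight_time :: "real option \<Rightarrow> real option \<Rightarrow> real" where
  "flight_time a b = (case (a, b) of
      (Some s, Some t) \<Rightarrow> min s t
    | (Some s, None) \<Rightarrow> s
    | (None, Some t) \<Rightarrow> t
    | (None, None) \<Rightarrow> 0)"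

definition bstep :: "bstate \<Rightarrow> bstate" where
  "bstep s = (case s of ((x, y), (vx, vy)) \<Rightarrow>
     (let t = flight_time (hit_time x vx) (hit_time y vy);
          x' = x + t * vx; y' = y + t * vy;
          vx' = (if x' = 0 \<or> x' = 1 then - vx else vx);
          vy' = (if y' = 0 \<or> y' = 1 then - vy else vy)
      in ((x', y'), (vx', vy'))))"

definition bstates :: "bstate \<Rightarrow> nat \<Rightarrow> bstate" where
  "bstates s n = (bstep ^^ n) s"

text \<open>Collision points of the trajectory started in state s, followed forward until it
  (possibly) reaches a vertex, where it terminates (the vertex itself is included).
  The initial point is always included (it may itself be a vertex, e.g. P0 = 0).\<close>
definition fwd_points :: "bstate \<Rightarrow> (real \<times> real) set" where
  "fwd_points s = {fst (bstates s n) | n.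
      \<forall>m. 0 < m \<and> m < n \<longrightarrow> fst (bstates s m) \<notin> sq_vertices}"

text \<open>The trajectory generated by <P0, alpha0>: collision at (P0,0) on AB with
  outgoing segment at angle alpha0 with AB.  Direction of motion is not distinguished,
  so the trajectory consists of the forward part (velocity (cos a, sin a)) and the
  backward part, which (after the reflection at (P0,0)) leaves (P0,0) with velocity
  (-cos a, sin a).  For P0 = 0 the trajectory starts at the vertex A.\<close>
definition gen_fwd :: "real \<Rightarrow> real \<Rightarrow> bstate" where
  "gen_fwd P0 a = ((P0, 0), (cos a, sin a))"

definition gen_bwd :: "real \<Rightarrow> real \<Rightarrow> bstate" where
  "gen_bwd P0 a = ((P0, 0), (- cos a, sin a))"

definition traj_points :: "real \<Rightarrow> real \<Rightarrow> (real \<times> real) set" where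
  "traj_points P0 a = fwd_points (gen_fwd P0 a) \<union>
      (if P0 = 0 then {} else fwd_points (gen_bwd P0 a))"

definition singular_orbit :: "real \<Rightarrow> real \<Rightarrow> bool" where
  "singular_orbit P0 a \<longleftrightarrow> traj_points P0 a \<inter> sq_vertices \<noteq> {}"

definition periodic_orbit :: "real \<Rightarrow> real \<Rightarrow> nat \<Rightarrow> bool" where
  "periodic_orbit P0 a K \<longleftrightarrow> \<not> singular_orbit P0 a \<and>
     (\<exists>N>0. bstates (gen_fwd P0 a) N = gen_fwd P0 a) \<and>
     finite (traj_points P0 a) \<and> card (traj_points P0 a) = K"

definition on_AB_CD :: "real \<times> real \<Rightarrow> bool" where
  "on_AB_CD P \<longleftrightarrow> snd P = 0 \<or> snd P = 1"

definition on_BC_DA :: "real \<times> real \<Rightarrow> bool" where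
  "on_BC_DA P \<longleftrightarrow> fst P = 0 \<or> fst P = 1"

definition in_class_C :: "nat \<Rightarrow> nat \<Rightarrow> real \<Rightarrow> real \<Rightarrow> bool" where
  "in_class_C K p P0 a \<longleftrightarrow> periodic_orbit P0 a K \<and>
     card {P \<in> traj_points P0 a. on_AB_CD P} = p \<and>
     card {P \<in> traj_points P0 a. on_BC_DA P} = K - p"

definition inward :: "real \<times> real \<Rightarrow> real \<times> real \<Rightarrow> bool" where
  "inward V v \<longleftrightarrow> fst v \<noteq> 0 \<and> snd v \<noteq> 0 \<and>
     (fst V = 0 \<longrightarrow> fst v > 0) \<and> (fst V = 1 \<longrightarrow> fst v < 0) \<and>
     (snd V = 0 \<longrightarrow> snd v > 0) \<and> (snd V = 1 \<longrightarrow> snd v < 0)"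

definition gen_diagonal :: "(real \<times> real) set \<Rightarrow> bool" where
  "gen_diagonal G \<longleftrightarrow> (\<exists>V v. V \<in> sq_vertices \<and> inward V v \<and> G = fwd_points (V, v))"

definition diag_length :: "(real \<times> real) set \<Rightarrow> nat" where
  "diag_length G = card (G - sq_vertices)"

end

theory Submission
  imports Defs
begin

text \<open>Reflecting the square in its sides straightens a billiard path of slope r = p/q through
  (P0, 0) into the line y = r (x - P0) of the plane; the path is recovered by folding both
  coordinates back into [0, 1] with the triangle wave of period 2. Collisions are the crossings of
  the line with the grid lines x \<in> \<int> and y \<in> \<int>, and vertices are its crossings through
  lattice points.

  Write p = 2a and q = 2b with a, b coprime. The line meets a lattice point iff a P0 \<in> \<int>, that
  is iff P0 = 2l/p. In that case consecutive lattice points on the line are b columns and a rows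
  apart, so the whole orbit lies on the segment between two of them: a generalised diagonal with
  a - 1 inner row crossings and b - 1 inner column crossings. Otherwise shifting by 2b columns
  moves the line by the even number 2a of rows, so the folded line is periodic; one period
  crosses 2a rows and 2b columns, and because a and b are not both even these 2a + 2b crossings
  fold to distinct points.\<close>

section \<open>The folded line and its grid crossings\<close>

definition fold_unit :: "real \<Rightarrow> real" where
  "fold_unit u = (if even \<lfloor>u\<rfloor> then frac u else 1 - frac u)"

definition fold_sign :: "real \<Rightarrow> real" where
  "fold_sign u = (if even \<lfloor>u\<rfloor> then 1 else -1)"

text \<open>The unfolded line y = r (x - P) is parametrised by the abscissa x; \<open>line_point\<close> folds
  its point back into the square and \<open>line_state\<close> adds the velocity (c, s), each component
  reflected according to the parity of the cell it lies in.\<close>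

definition line_point :: "real \<Rightarrow> real \<Rightarrow> real \<Rightarrow> real \<times> real" where
  "line_point r P x = (fold_unit x, fold_unit (r * (x - P)))"

definition line_state :: "real \<Rightarrow> real \<Rightarrow> real \<Rightarrow> real \<Rightarrow> real \<Rightarrow> bstate" where
  "line_state c s r P x = (line_point r P x, (fold_sign x * c, fold_sign (r * (x - P)) * s))"

definition crossings :: "real \<Rightarrow> real \<Rightarrow> real set" where
  "crossings r P = {x. x \<in> \<int> \<or> r * (x - P) \<in> \<int>}"

definition lattice_crossings :: "real \<Rightarrow> real \<Rightarrow> real set" where
  "lattice_crossings r P = {x. x \<in> \<int> \<and> r * (x - P) \<in> \<int>}"

definition next_crossing :: "real \<Rightarrow> real \<Rightarrow> real \<Rightarrow> real" where
  "next_crossing r P x = x + min (1 - frac x) ((1 - frac (r * (x - P))) / r)"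

definition crossing_seq :: "real \<Rightarrow> real \<Rightarrow> real \<Rightarrow> nat \<Rightarrow> real" where
  "crossing_seq r P x0 n = (next_crossing r P ^^ n) x0"

lemma crossing_seq_0 [simp]: "crossing_seq r P x0 0 = x0"
  and crossing_seq_Suc [simp]: "crossing_seq r P x0 (Suc n) = next_crossing r P (crossing_seq r P x0 n)"
  by (simp_all add: crossing_seq_def)

lemma fold_advance:
  assumes d: "0 < d" "d \<le> 1 - frac u"
  shows "fold_unit (u + d) = fold_unit u + fold_sign u * d"
    and "fold_sign (u + d) =
           (if fold_unit (u + d) = 0 \<or> fold_unit (u + d) = 1 then - fold_sign u else fold_sign u)"
proof -
  have "fold_unit (u + d) = fold_unit u + fold_sign u * d \<and>
        fold_sign (u + d) =
          (if fold_unit (u + d) = 0 \<or> fold_unit (u + d) = 1 then - fold_sign u else fold_sign u)"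
  proof (cases "d < 1 - frac u")
    case True
    have fl: "\<lfloor>u + d\<rfloor> = \<lfloor>u\<rfloor>"
    proof (rule floor_unique)
      show "real_of_int \<lfloor>u\<rfloor> \<le> u + d" using of_int_floor_le[of u] d by linarith
      show "u + d < real_of_int \<lfloor>u\<rfloor> + 1" using True by (simp add: frac_def)
    qed
    have fr: "frac (u + d) = frac u + d" using fl by (simp add: frac_def)
    have "0 < frac (u + d)" "frac (u + d) < 1" using fr d True frac_ge_0[of u] by linarith+
    then have "fold_unit (u + d) \<noteq> 0 \<and> fold_unit (u + d) \<noteq> 1" using fl unfolding fold_unit_def by auto
    then show ?thesis using fl fr unfolding fold_unit_def fold_sign_def by auto
  next
    case False
    then have e: "u + d = of_int (\<lfloor>u\<rfloor> + 1)" using d by (simp add: frac_def)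
    have fl: "\<lfloor>u + d\<rfloor> = \<lfloor>u\<rfloor> + 1" by (subst e) (simp only: floor_of_int)
    have fr: "frac (u + d) = 0" by (subst e) (simp only: frac_of_int)
    have dd: "d = 1 - frac u" using False d by auto
    show ?thesis unfolding fold_unit_def fold_sign_def by (simp only: fl fr) (auto simp: dd)
  qed
  then show "fold_unit (u + d) = fold_unit u + fold_sign u * d"
    and "fold_sign (u + d) =
           (if fold_unit (u + d) = 0 \<or> fold_unit (u + d) = 1 then - fold_sign u else fold_sign u)"
    by blast+
qed

lemma hit_time_fold: "c > 0 \<Longrightarrow> hit_time (fold_unit u) (fold_sign u * c) = Some ((1 - frac u) / c)"
  unfolding hit_time_def fold_unit_def fold_sign_def by (auto simp: divide_simps)

lemma bstep_line_state:
  assumes c: "c > 0" and r: "r > 0" and s: "s = c * r"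
  shows "bstep (line_state c s r P x) = line_state c s r P (next_crossing r P x)"
proof -
  define y where "y = r * (x - P)"
  define d where "d = min (1 - frac x) ((1 - frac y) / r)"
  define t where "t = min ((1 - frac x) / c) ((1 - frac y) / s)"
  have s_pos: "s > 0" using c r s by simp
  have td: "t * c = d" unfolding t_def d_def s using c r
    by (simp add: min_mult_distrib_right divide_simps)
  have tds: "t * s = r * d" using td s by (simp add: algebra_simps)
  have d_pos: "0 < d" unfolding d_def using frac_lt_1[of x] frac_lt_1[of y] r by auto
  have dx: "d \<le> 1 - frac x" unfolding d_def by auto
  have dy: "r * d \<le> 1 - frac y" unfolding d_def using r
    by (metis min.cobounded2 mult.commute pos_le_divide_eq)
  have rd_pos: "0 < r * d" using r d_pos by simp
  note mx = fold_advance[OF d_pos dx] and my = fold_advance[OF rd_pos dy]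
  have nx: "next_crossing r P x = x + d" unfolding next_crossing_def d_def y_def by simp
  have ny: "r * (next_crossing r P x - P) = y + r * d" unfolding nx y_def by (simp add: algebra_simps)
  have ft: "flight_time (Some ((1 - frac x) / c)) (Some ((1 - frac y) / s)) = t"
    unfolding flight_time_def t_def by simp
  have ex: "fold_unit x + t * (fold_sign x * c) = fold_unit (x + d)" using mx td by (simp add: algebra_simps)
  have ey: "fold_unit y + t * (fold_sign y * s) = fold_unit (y + r * d)" using my tds by (simp add: algebra_simps)
  show ?thesis
    unfolding bstep_def line_state_def line_point_def
    apply (simp only: hit_time_fold[OF c] hit_time_fold[OF s_pos] prod.case Let_def flip: y_def)
    apply (simp only: ft ex ey ny)
    by (simp only: nx) (simp add: mx(2) my(2))
qed

lemma bstates_line_state: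
  assumes "c > 0" "r > 0" "s = c * r"
  shows "bstates (line_state c s r P x0) n = line_state c s r P (crossing_seq r P x0 n)"
  unfolding bstates_def by (induction n) (simp_all add: bstep_line_state[OF assms])

lemma fold_unit_boundary_iff: "fold_unit u = 0 \<or> fold_unit u = 1 \<longleftrightarrow> u \<in> \<int>"
proof -
  have "fold_unit u = 0 \<or> fold_unit u = 1 \<longleftrightarrow> frac u = 0"
    using frac_lt_1[of u] frac_ge_0[of u] unfolding fold_unit_def by auto
  then show ?thesis by simp
qed

lemma line_point_vertex_iff: "line_point r P x \<in> sq_vertices \<longleftrightarrow> x \<in> lattice_crossings r P"
proof -
  have "line_point r P x \<in> sq_vertices \<longleftrightarrow>
      (fold_unit x = 0 \<or> fold_unit x = 1) \<and> (fold_unit (r * (x - P)) = 0 \<or> fold_unit (r * (x - P)) = 1)"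
    unfolding sq_vertices_def line_point_def by auto
  then show ?thesis unfolding lattice_crossings_def fold_unit_boundary_iff by simp
qed

lemma on_AB_CD_line_point: "on_AB_CD (line_point r P x) \<longleftrightarrow> r * (x - P) \<in> \<int>"
  unfolding on_AB_CD_def line_point_def using fold_unit_boundary_iff by simp

lemma on_BC_DA_line_point: "on_BC_DA (line_point r P x) \<longleftrightarrow> x \<in> \<int>"
  unfolding on_BC_DA_def line_point_def using fold_unit_boundary_iff by simp

lemma crossing_on_side:
  "x \<in> crossings r P \<Longrightarrow> on_AB_CD (line_point r P x) \<or> on_BC_DA (line_point r P x)"
  unfolding crossings_def on_AB_CD_line_point on_BC_DA_line_point by blast

lemma on_both_sides_imp_vertex: "on_AB_CD Q \<Longrightarrow> on_BC_DA Q \<Longrightarrow> Q \<in> sq_vertices"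
  unfolding on_AB_CD_def on_BC_DA_def sq_vertices_def by (cases Q) auto

lemma on_AB_CD_image_line_point:
  "{Q \<in> line_point r P ` S. on_AB_CD Q} = line_point r P ` {x \<in> S. r * (x - P) \<in> \<int>}"
  by (auto simp: on_AB_CD_line_point)

lemma on_BC_DA_image_line_point:
  "{Q \<in> line_point r P ` S. on_BC_DA Q} = line_point r P ` {x \<in> S. x \<in> \<int>}"
  by (auto simp: on_BC_DA_line_point)

lemma lattice_crossings_subset: "lattice_crossings r P \<subseteq> crossings r P"
  unfolding lattice_crossings_def crossings_def by auto

lemma next_crossing_gt: "r > 0 \<Longrightarrow> x < next_crossing r P x"
  unfolding next_crossing_def using frac_lt_1[of x] frac_lt_1[of "r * (x - P)"] by auto

lemma next_crossing_in_crossings: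
  assumes r: "r > 0" shows "next_crossing r P x \<in> crossings r P"
proof (cases "1 - frac x \<le> (1 - frac (r * (x - P))) / r")
  case True
  then have "next_crossing r P x = of_int (\<lfloor>x\<rfloor> + 1)" unfolding next_crossing_def by (simp add: frac_def)
  then show ?thesis unfolding crossings_def by simp
next
  case False
  define y where "y = r * (x - P)"
  have "r * (next_crossing r P x - P) = y + r * ((1 - frac y) / r)"
    using False unfolding next_crossing_def y_def by (simp add: algebra_simps)
  also have "\<dots> = of_int (\<lfloor>y\<rfloor> + 1)" using r by (simp add: frac_def)
  finally show ?thesis unfolding crossings_def by simp
qed

lemma not_crossing_before_next:
  assumes r: "r > 0" and e: "x < e" "e < next_crossing r P x"
  shows "e \<notin> crossings r P"
proof
  have between_ints: False if "u < v" "v < u + (1 - frac u)" "v \<in> \<int>" for u v :: real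
  proof -
    obtain n where n: "v = of_int n" using \<open>v \<in> \<int>\<close> by (auto elim: Ints_cases)
    have "of_int \<lfloor>u\<rfloor> < v" using that(1) of_int_floor_le[of u] by linarith
    moreover have "v < of_int (\<lfloor>u\<rfloor> + 1)" using that(2) by (simp add: frac_def)
    ultimately have "\<lfloor>u\<rfloor> < n" "n < \<lfloor>u\<rfloor> + 1" unfolding n by (simp_all only: of_int_less_iff)
    then show False by simp
  qed
  assume "e \<in> crossings r P"
  then consider "e \<in> \<int>" | "r * (e - P) \<in> \<int>" unfolding crossings_def by auto
  then show False
  proof cases
    case 1
    have "e < x + (1 - frac x)" using e unfolding next_crossing_def by simp
    then show False using 1 e between_ints by blast
  next
    case 2
    have "r * (x - P) < r * (e - P)" using e r by simp
    moreover have "e < x + (1 - frac (r * (x - P))) / r" using e unfolding next_crossing_def by simp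
    then have "r * (e - P) < r * (x - P) + (1 - frac (r * (x - P)))"
      using r by (simp add: field_simps)
    ultimately show False using 2 between_ints by blast
  qed
qed

lemma finite_crossings_Icc:
  assumes r: "r > 0" shows "finite (crossings r P \<inter> {lo..hi})"
proof (rule finite_subset)
  show "finite (of_int ` {\<lfloor>lo\<rfloor>..\<lceil>hi\<rceil>} \<union> (\<lambda>k. P + of_int k / r) ` {\<lfloor>r * (lo - P)\<rfloor>..\<lceil>r * (hi - P)\<rceil>} :: real set)"
    by simp
  show "crossings r P \<inter> {lo..hi} \<subseteq>
      of_int ` {\<lfloor>lo\<rfloor>..\<lceil>hi\<rceil>} \<union> (\<lambda>k. P + of_int k / r) ` {\<lfloor>r * (lo - P)\<rfloor>..\<lceil>r * (hi - P)\<rceil>}"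
  proof
    fix x assume x: "x \<in> crossings r P \<inter> {lo..hi}"
    then consider "x \<in> \<int>" | "r * (x - P) \<in> \<int>" unfolding crossings_def by auto
    then show "x \<in> of_int ` {\<lfloor>lo\<rfloor>..\<lceil>hi\<rceil>} \<union> (\<lambda>k. P + of_int k / r) ` {\<lfloor>r * (lo - P)\<rfloor>..\<lceil>r * (hi - P)\<rceil>}"
    proof cases
      case 1
      then obtain n where n: "x = of_int n" by (auto elim: Ints_cases)
      have "n \<in> {\<lfloor>lo\<rfloor>..\<lceil>hi\<rceil>}" using x n by (auto simp: floor_le_iff le_ceiling_iff)
      then show ?thesis using n by auto
    next
      case 2
      then obtain k where k: "r * (x - P) = of_int k" by (auto elim: Ints_cases)
      have "r * (lo - P) \<le> of_int k" "of_int k \<le> r * (hi - P)" using x r unfolding k[symmetric] by auto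
      then have "k \<in> {\<lfloor>r * (lo - P)\<rfloor>..\<lceil>r * (hi - P)\<rceil>}" by (simp add: floor_le_iff le_ceiling_iff)
      moreover have "x = P + of_int k / r" using k r by (simp add: field_simps)
      ultimately show ?thesis by auto
    qed
  qed
qed

context
  fixes r P x0 :: real
  assumes r: "r > 0"
begin

lemma strict_mono_crossing_seq: "strict_mono (crossing_seq r P x0)"
  unfolding strict_mono_Suc_iff using next_crossing_gt[OF r] by simp

lemma crossing_seq_ge: "x0 \<le> crossing_seq r P x0 n"
  using strict_mono_less_eq[OF strict_mono_crossing_seq, of 0 n] by simp

lemma crossing_seq_in_crossings: "x0 \<in> crossings r P \<Longrightarrow> crossing_seq r P x0 n \<in> crossings r P"
  by (cases n) (simp_all add: next_crossing_in_crossings[OF r])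

lemma crossings_below_crossing_seq:
  assumes x0: "x0 \<in> crossings r P"
  shows "crossings r P \<inter> {x0..<crossing_seq r P x0 n} = crossing_seq r P x0 ` {..<n}"
proof (induction n)
  case 0 then show ?case by auto
next
  case (Suc n)
  define e where "e = crossing_seq r P x0 n"
  have "crossings r P \<inter> {x0..<next_crossing r P e} = crossings r P \<inter> {x0..<e} \<union> {e}"
  proof (intro equalityI subsetI)
    fix y assume y: "y \<in> crossings r P \<inter> {x0..<next_crossing r P e}"
    then have "\<not> e < y" using not_crossing_before_next[OF r, of e y] by auto
    then show "y \<in> crossings r P \<inter> {x0..<e} \<union> {e}" using y by auto
  next
    fix y assume "y \<in> crossings r P \<inter> {x0..<e} \<union> {e}"
    then show "y \<in> crossings r P \<inter> {x0..<next_crossing r P e}"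
      using next_crossing_gt[OF r, of e P] crossing_seq_ge[of n] crossing_seq_in_crossings[OF x0, of n]
      unfolding e_def by auto
  qed
  then show ?case using Suc unfolding e_def by (auto simp: lessThan_Suc)
qed

lemma crossing_seq_card:
  assumes x0: "x0 \<in> crossings r P"
  shows "card (crossings r P \<inter> {x0..<crossing_seq r P x0 n}) = n"
  unfolding crossings_below_crossing_seq[OF x0]
  using strict_mono_crossing_seq by (simp add: card_image strict_mono_imp_inj_on)

lemma crossing_seq_reaches:
  assumes x0: "x0 \<in> crossings r P" and e: "e \<in> crossings r P" "x0 \<le> e"
  shows "\<exists>n. crossing_seq r P x0 n = e"
proof -
  have "\<exists>n. e < crossing_seq r P x0 n"
  proof (rule ccontr)
    assume "\<not> ?thesis"
    then have "crossing_seq r P x0 ` {..<Suc K} \<subseteq> crossings r P \<inter> {x0..e}" for K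
      using crossings_below_crossing_seq[OF x0, of "Suc K"] by (auto simp: not_less)
    then have "card (crossings r P \<inter> {x0..<crossing_seq r P x0 (Suc K)}) \<le> card (crossings r P \<inter> {x0..e})" for K
      unfolding crossings_below_crossing_seq[OF x0] by (intro card_mono finite_crossings_Icc[OF r])
    from this[of "card (crossings r P \<inter> {x0..e})"] show False
      unfolding crossing_seq_card[OF x0] by simp
  qed
  then obtain n where "e < crossing_seq r P x0 n" by blast
  then have "e \<in> crossing_seq r P x0 ` {..<n}" using crossings_below_crossing_seq[OF x0, of n] e by auto
  then show ?thesis by blast
qed

lemma crossing_seq_eq_card:
  assumes x0: "x0 \<in> crossings r P" and e: "e \<in> crossings r P" "x0 \<le> e"
  shows "crossing_seq r P x0 (card (crossings r P \<inter> {x0..<e})) = e"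
  using crossing_seq_reaches[OF x0 e] crossing_seq_card[OF x0] by metis

lemma fwd_points_line_state:
  assumes "c > 0" "s = c * r"
  shows "fwd_points (line_state c s r P x0) =
    {line_point r P (crossing_seq r P x0 n) | n.
       \<forall>m. 0 < m \<and> m < n \<longrightarrow> crossing_seq r P x0 m \<notin> lattice_crossings r P}"
  unfolding fwd_points_def bstates_line_state[OF assms(1) r assms(2)]
  by (simp add: line_state_def line_point_vertex_iff)

lemma line_point_in_fwd_points:
  assumes c: "c > 0" "s = c * r" and x0: "x0 \<in> crossings r P" and e: "e \<in> crossings r P" "x0 \<le> e"
    and before: "\<And>w. w \<in> lattice_crossings r P \<Longrightarrow> x0 < w \<Longrightarrow> e \<le> w"
  shows "line_point r P e \<in> fwd_points (line_state c s r P x0)"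
proof -
  obtain n where n: "crossing_seq r P x0 n = e" using crossing_seq_reaches[OF x0 e] by blast
  have "crossing_seq r P x0 m \<notin> lattice_crossings r P" if "0 < m" "m < n" for m
    using strict_mono_crossing_seq[THEN strict_monoD, of 0 m] strict_mono_crossing_seq[THEN strict_monoD, of m n]
      that n before by force
  then show ?thesis unfolding fwd_points_line_state[OF c] using n by blast
qed

lemma fwd_points_line_state_subset:
  assumes c: "c > 0" "s = c * r" and x0: "x0 \<in> crossings r P"
    and z: "z \<in> lattice_crossings r P" "x0 < z"
  shows "fwd_points (line_state c s r P x0) \<subseteq> line_point r P ` (crossings r P \<inter> {x0..z})"
proof
  fix Q assume "Q \<in> fwd_points (line_state c s r P x0)"
  then obtain n where Q: "Q = line_point r P (crossing_seq r P x0 n)"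
    and before: "\<forall>m. 0 < m \<and> m < n \<longrightarrow> crossing_seq r P x0 m \<notin> lattice_crossings r P"
    unfolding fwd_points_line_state[OF c] by blast
  obtain j where j: "crossing_seq r P x0 j = z"
    using crossing_seq_reaches[OF x0] z lattice_crossings_subset by force
  have "0 < j" using j z by (cases j) auto
  then have "\<not> j < n" using before j z by blast
  then have "crossing_seq r P x0 n \<le> z"
    using strict_mono_less_eq[OF strict_mono_crossing_seq, of n j] j by (simp add: not_less)
  then show "Q \<in> line_point r P ` (crossings r P \<inter> {x0..z})"
    using Q crossing_seq_in_crossings[OF x0] crossing_seq_ge by auto
qed

lemma fwd_points_line_state_eq:
  assumes c: "c > 0" "s = c * r" and x0: "x0 \<in> crossings r P"
    and z: "z \<in> lattice_crossings r P" "x0 < z"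
    and first: "\<And>w. w \<in> lattice_crossings r P \<Longrightarrow> x0 < w \<Longrightarrow> z \<le> w"
  shows "fwd_points (line_state c s r P x0) = line_point r P ` (crossings r P \<inter> {x0..z})"
proof
  show "fwd_points (line_state c s r P x0) \<subseteq> line_point r P ` (crossings r P \<inter> {x0..z})"
    by (rule fwd_points_line_state_subset[OF c x0 z])
  show "line_point r P ` (crossings r P \<inter> {x0..z}) \<subseteq> fwd_points (line_state c s r P x0)"
    using line_point_in_fwd_points[OF c x0] first by fastforce
qed

lemma fwd_points_line_state_no_lattice:
  assumes c: "c > 0" "s = c * r" and x0: "x0 \<in> crossings r P"
    and no_lattice: "lattice_crossings r P = {}"
  shows "fwd_points (line_state c s r P x0) = line_point r P ` (crossings r P \<inter> {x0..})"
proof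
  show "fwd_points (line_state c s r P x0) \<subseteq> line_point r P ` (crossings r P \<inter> {x0..})"
    unfolding fwd_points_line_state[OF c] using crossing_seq_in_crossings[OF x0] crossing_seq_ge by auto
  show "line_point r P ` (crossings r P \<inter> {x0..}) \<subseteq> fwd_points (line_state c s r P x0)"
    using line_point_in_fwd_points[OF c x0] no_lattice by auto
qed

end

lemma fold_of_int [simp]:
  "fold_unit (of_int n) = (if even n then 0 else 1)"
  "fold_sign (of_int n) = (if even n then 1 else -1)"
  unfolding fold_unit_def fold_sign_def by simp_all

lemma fold_add_even:
  "fold_unit (u + 2 * of_int m) = fold_unit u"
  "fold_sign (u + 2 * of_int m) = fold_sign u"
proof -
  have e: "u + 2 * of_int m = u + of_int (2 * m)" by simp
  have "\<lfloor>u + 2 * of_int m\<rfloor> = \<lfloor>u\<rfloor> + 2 * m" unfolding e by (simp only: floor_add_int[symmetric])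
  moreover have "frac (u + 2 * of_int m) = frac u" unfolding e by (simp only: frac_add_of_int_right)
  ultimately show "fold_unit (u + 2 * of_int m) = fold_unit u" "fold_sign (u + 2 * of_int m) = fold_sign u"
    unfolding fold_unit_def fold_sign_def by auto
qed

lemma fold_unit_minus: "fold_unit (- u) = fold_unit u"
proof (cases "u \<in> \<int>")
  case True
  then obtain n where n: "u = of_int n" by (auto elim: Ints_cases)
  then show ?thesis using fold_of_int(1)[of "- n"] by simp
next
  case False
  have fr: "frac (- u) = 1 - frac u" using False by (simp add: frac_neg)
  have "of_int \<lfloor>- u\<rfloor> = (of_int (- \<lfloor>u\<rfloor> - 1) :: real)" using fr by (simp add: frac_def)
  then have "\<lfloor>- u\<rfloor> = - \<lfloor>u\<rfloor> - 1" by (simp only: of_int_eq_iff)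
  then show ?thesis using fr unfolding fold_unit_def by auto
qed

lemma fold_unit_reflect: "fold_unit (2 - u) = fold_unit u"
  using fold_add_even(1)[of "- u" 1] by (simp add: fold_unit_minus)

lemma fold_unit_eq_cases:
  assumes "fold_unit u = fold_unit v"
  shows "(\<exists>m::int. u - v = 2 * of_int m) \<or> (\<exists>m::int. u + v = 2 * of_int m)"
proof (cases "even \<lfloor>u\<rfloor> = even \<lfloor>v\<rfloor>")
  case True
  then have "frac u = frac v" using assms unfolding fold_unit_def by (auto split: if_splits)
  then have "u - v = of_int (\<lfloor>u\<rfloor> - \<lfloor>v\<rfloor>)" by (simp add: frac_def)
  moreover have "even (\<lfloor>u\<rfloor> - \<lfloor>v\<rfloor>)" using True by simp
  then obtain m where "\<lfloor>u\<rfloor> - \<lfloor>v\<rfloor> = 2 * m" by (rule evenE)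
  ultimately show ?thesis by auto
next
  case False
  then have "frac u = 1 - frac v" using assms unfolding fold_unit_def by (auto split: if_splits)
  then have "u + v = of_int (\<lfloor>u\<rfloor> + \<lfloor>v\<rfloor> + 1)" by (simp add: frac_def)
  moreover have "even (\<lfloor>u\<rfloor> + \<lfloor>v\<rfloor> + 1)" using False by simp
  then obtain m where "\<lfloor>u\<rfloor> + \<lfloor>v\<rfloor> + 1 = 2 * m" by (rule evenE)
  ultimately show ?thesis by auto
qed

lemma fold_unit_of_int_eq_imp_parity:
  "fold_unit (of_int k1) = fold_unit (of_int k2) \<Longrightarrow> even k1 = even k2"
  by (auto split: if_splits)

lemma line_point_reflect: "line_point r (2 - P) x = line_point r P (2 - x)"
proof -
  have "r * (x - (2 - P)) = - (r * ((2 - x) - P))" by (simp add: algebra_simps)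
  then show ?thesis unfolding line_point_def by (simp add: fold_unit_reflect fold_unit_minus)
qed

lemma slope_reflect_in_Ints_iff: "(r::real) * (x - (2 - P)) \<in> \<int> \<longleftrightarrow> r * ((2 - x) - P) \<in> \<int>"
proof -
  have "r * (x - (2 - P)) = - (r * ((2 - x) - P))" by (simp add: algebra_simps)
  then show ?thesis by (simp only: minus_in_Ints_iff)
qed

lemma crossings_reflect: "x \<in> crossings r (2 - P) \<longleftrightarrow> 2 - x \<in> crossings r P"
  unfolding crossings_def using slope_reflect_in_Ints_iff by simp

lemma lattice_crossings_reflect: "x \<in> lattice_crossings r (2 - P) \<longleftrightarrow> 2 - x \<in> lattice_crossings r P"
  unfolding lattice_crossings_def using slope_reflect_in_Ints_iff by simp

lemma inward_line_state_of_int: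
  "c > 0 \<Longrightarrow> s > 0 \<Longrightarrow> inward (fold_unit (of_int n), fold_unit (of_int m))
     (fold_sign (of_int n) * c, fold_sign (of_int m) * s)"
  unfolding inward_def by simp

lemma even_mult_eq_0_if_small:
  fixes a j :: int
  assumes "a > 0" "even j" "\<bar>a * j\<bar> < 2 * a"
  shows "j = 0"
proof -
  have "\<bar>j\<bar> < 2" using assms by (simp add: abs_mult)
  then show ?thesis using assms(2) by presburger
qed

lemma fold_unit_progression_eq:
  fixes a b k1 k2 :: int and C :: real
  assumes a: "a > 0" and cop: "coprime a b" and parity: "even k1 = even k2"
    and eq: "fold_unit (C + of_int k1 * of_int b / of_int a) = fold_unit (C + of_int k2 * of_int b / of_int a)"
  shows "(\<exists>j. k1 - k2 = a * j \<and> (odd j \<longrightarrow> even a \<and> even b)) \<or>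
         (\<exists>t m. k1 + k2 = 2 * t \<and> C + of_int t * of_int b / of_int a = of_int m)"
  using fold_unit_eq_cases[OF eq]
proof
  assume "\<exists>m::int. C + of_int k1 * of_int b / of_int a - (C + of_int k2 * of_int b / of_int a) = 2 * of_int m"
  then obtain m :: int where "of_int k1 * of_int b / of_int a - of_int k2 * of_int b / of_int a = 2 * (of_int m :: real)"
    by auto
  then have "real_of_int ((k1 - k2) * b) = of_int (2 * m * a)" using a by (simp add: field_simps)
  then have e: "(k1 - k2) * b = 2 * m * a" by (simp only: of_int_eq_iff)
  then have "a dvd k1 - k2" using cop by (metis coprime_dvd_mult_left_iff dvd_triv_right)
  then obtain j where j: "k1 - k2 = a * j" by blast
  have jb: "j * b = 2 * m" using e j a by (simp add: algebra_simps)
  have "even a \<and> even b" if "odd j"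
  proof
    show "even b" using jb that by (metis dvd_triv_left even_mult_iff)
    have "even (k1 - k2)" using parity by simp
    then have "even (a * j)" using j by simp
    then show "even a" using that by simp
  qed
  then show ?thesis using j by blast
next
  assume "\<exists>m::int. C + of_int k1 * of_int b / of_int a + (C + of_int k2 * of_int b / of_int a) = 2 * of_int m"
  then obtain m :: int where m: "C + of_int k1 * of_int b / of_int a + (C + of_int k2 * of_int b / of_int a) = 2 * of_int m"
    by blast
  obtain t where t: "k1 + k2 = 2 * t" using parity by (metis evenE even_add)
  have "C + of_int k1 * of_int b / of_int a + (C + of_int k2 * of_int b / of_int a)
      = 2 * (C + of_int (k1 + k2) / 2 * of_int b / of_int a)" using a by (simp add: field_simps)
  then have "C + of_int t * of_int b / of_int a = of_int m" using m t by simp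
  then show ?thesis using t by blast
qed

lemma image_line_point_reflect:
  "line_point r (2 - P) ` (crossings r (2 - P) \<inter> {lo..hi}) = line_point r P ` (crossings r P \<inter> {2 - hi..2 - lo})"
proof -
  have "crossings r (2 - P) \<inter> {lo..hi} = (\<lambda>x. 2 - x) ` (crossings r P \<inter> {2 - hi..2 - lo})"
  proof (intro equalityI subsetI)
    fix x assume "x \<in> crossings r (2 - P) \<inter> {lo..hi}"
    then show "x \<in> (\<lambda>x. 2 - x) ` (crossings r P \<inter> {2 - hi..2 - lo})"
      by (intro image_eqI[of _ _ "2 - x"]) (auto simp: crossings_reflect)
  qed (auto simp: crossings_reflect)
  then show ?thesis by (simp add: image_image line_point_reflect)
qed

lemma gen_fwd_line_state:
  assumes "0 \<le> P0" "P0 < 1"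
  shows "gen_fwd P0 \<alpha> = line_state (cos \<alpha>) (sin \<alpha>) r P0 P0"
proof -
  have "\<lfloor>P0\<rfloor> = 0" using assms by (simp add: floor_eq_iff)
  then show ?thesis unfolding gen_fwd_def line_state_def line_point_def fold_unit_def fold_sign_def frac_def
    by simp
qed

text \<open>Moving left from (P0, 0) is the folded image of moving right from the mirror point
  (2 - P0, 0) across the side BC.\<close>

lemma gen_bwd_line_state:
  assumes "0 < P0" "P0 < 1"
  shows "gen_bwd P0 \<alpha> = line_state (cos \<alpha>) (sin \<alpha>) r (2 - P0) (2 - P0)"
proof -
  have "\<lfloor>2 - P0\<rfloor> = 1" using assms by (simp add: floor_eq_iff)
  then show ?thesis unfolding gen_bwd_def line_state_def line_point_def fold_unit_def fold_sign_def frac_def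
    by simp
qed

lemma traj_points_line_state:
  assumes "0 \<le> P0" "P0 < 1"
  shows "traj_points P0 \<alpha> = fwd_points (line_state (cos \<alpha>) (sin \<alpha>) r P0 P0) \<union>
    (if P0 = 0 then {} else fwd_points (line_state (cos \<alpha>) (sin \<alpha>) r (2 - P0) (2 - P0)))"
  using assms gen_fwd_line_state gen_bwd_line_state unfolding traj_points_def by simp

lemma sin_eq_cos_tan: "cos x \<noteq> 0 \<Longrightarrow> sin x = cos x * tan x"
  by (simp add: tan_def)

section \<open>Lines of rational slope\<close>

locale rational_line =
  fixes a b :: int and P0 r :: real
  assumes a_pos: "a > 0" and b_pos: "b > 0" and coprime_ab: "coprime a b"
    and slope: "r = of_int a / of_int b"
begin

lemma r_pos: "r > 0"
  using a_pos b_pos slope by simp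

definition row_crossing :: "int \<Rightarrow> real" where
  "row_crossing k = P0 + of_int k * of_int b / of_int a"

lemma slope_row_crossing [simp]: "r * (row_crossing k - P0) = of_int k"
  unfolding row_crossing_def slope using a_pos b_pos by (simp add: field_simps)

lemma row_crossing_unique: "r * (x - P0) = of_int k \<Longrightarrow> x = row_crossing k"
  unfolding row_crossing_def slope using a_pos b_pos by (simp add: field_simps)

lemma row_crossing_add_b: "row_crossing k + of_int b = row_crossing (k + a)"
  unfolding row_crossing_def using a_pos by (simp add: field_simps)

lemma row_crossing_less_iff [simp]: "row_crossing k1 < row_crossing k2 \<longleftrightarrow> k1 < k2"
  unfolding row_crossing_def using a_pos b_pos by (simp add: divide_less_cancel mult_less_cancel_right)

lemma row_crossing_le_iff [simp]: "row_crossing k1 \<le> row_crossing k2 \<longleftrightarrow> k1 \<le> k2"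
  by (metis not_less row_crossing_less_iff)

lemma row_crossing_in_crossings: "row_crossing k \<in> crossings r P0"
  unfolding crossings_def by simp

lemma crossings_cases:
  assumes "x \<in> crossings r P0"
  obtains n where "x = of_int n" | k where "x = row_crossing k"
  using assms unfolding crossings_def by (auto elim!: Ints_cases intro: row_crossing_unique)

lemma slope_of_int: "r * (of_int n - P0) = - (of_int a * P0 / of_int b) + of_int n * of_int a / of_int b"
  unfolding slope using b_pos by (simp add: field_simps)

lemma not_both_even: "\<not> (even a \<and> even b)"
  using coprime_common_divisor[OF coprime_ab, of 2] by auto

lemma lattice_crossings_empty:
  assumes "\<And>j::int. P0 * of_int a \<noteq> of_int j"
  shows "lattice_crossings r P0 = {}"
proof -
  have False if "of_int n \<in> lattice_crossings r P0" for n
  proof -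
    have "r * (of_int n - P0) \<in> \<int>" using that unfolding lattice_crossings_def by simp
    then obtain m where "r * (of_int n - P0) = of_int m" by (auto elim: Ints_cases)
    then have "P0 * of_int a = of_int (a * n - m * b)" using b_pos unfolding slope by (simp add: field_simps)
    then show False using assms by blast
  qed
  then show ?thesis unfolding lattice_crossings_def by (auto elim: Ints_cases)
qed

lemma row_points_eq:
  assumes "line_point r P0 (row_crossing k1) = line_point r P0 (row_crossing k2)"
  shows "(\<exists>j. k1 - k2 = a * j \<and> even j) \<or>
         (\<exists>t. k1 + k2 = 2 * t \<and> row_crossing t \<in> lattice_crossings r P0)"
proof -
  have parity: "even k1 = even k2" using assms unfolding line_point_def
    by (intro fold_unit_of_int_eq_imp_parity) simp
  have "fold_unit (P0 + of_int k1 * of_int b / of_int a) = fold_unit (P0 + of_int k2 * of_int b / of_int a)"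
    using assms unfolding line_point_def row_crossing_def by simp
  from fold_unit_progression_eq[OF a_pos coprime_ab parity this] show ?thesis
  proof (elim disjE exE conjE)
    fix j assume "k1 - k2 = a * j" "odd j \<longrightarrow> even a \<and> even b"
    then show ?thesis using not_both_even by blast
  next
    fix t m assume t: "k1 + k2 = 2 * t" and "P0 + of_int t * of_int b / of_int a = of_int m"
    then have "row_crossing t \<in> \<int>" unfolding row_crossing_def by simp
    then have "row_crossing t \<in> lattice_crossings r P0" unfolding lattice_crossings_def by simp
    then show ?thesis using t by blast
  qed
qed

lemma column_points_eq:
  assumes "line_point r P0 (of_int n1) = line_point r P0 (of_int n2)"
  shows "(\<exists>j. n1 - n2 = b * j \<and> even j) \<or>
         (\<exists>t. n1 + n2 = 2 * t \<and> of_int t \<in> lattice_crossings r P0)"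
proof -
  have parity: "even n1 = even n2" using assms unfolding line_point_def
    by (intro fold_unit_of_int_eq_imp_parity) simp
  have "fold_unit (- (of_int a * P0 / of_int b) + of_int n1 * of_int a / of_int b) =
        fold_unit (- (of_int a * P0 / of_int b) + of_int n2 * of_int a / of_int b)"
    using assms unfolding line_point_def slope_of_int by simp
  from fold_unit_progression_eq[OF b_pos coprime_ab[unfolded coprime_commute[of a]] parity this]
  show ?thesis
  proof (elim disjE exE conjE)
    fix j assume "n1 - n2 = b * j" "odd j \<longrightarrow> even b \<and> even a"
    then show ?thesis using not_both_even by blast
  next
    fix t m assume t: "n1 + n2 = 2 * t"
      and "- (of_int a * P0 / of_int b) + of_int t * of_int a / of_int b = (of_int m :: real)"
    then have "r * (of_int t - P0) \<in> \<int>" unfolding slope_of_int by simp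
    then have "of_int t \<in> lattice_crossings r P0" unfolding lattice_crossings_def by simp
    then show ?thesis using t by blast
  qed
qed

lemma inj_on_row_points:
  assumes width: "hi - lo \<le> 2 * a + 1"
    and no_lattice: "\<And>t. lo < t \<Longrightarrow> t < hi \<Longrightarrow> row_crossing t \<notin> lattice_crossings r P0"
  shows "inj_on (\<lambda>k. line_point r P0 (row_crossing k)) {lo<..<hi}"
proof (rule inj_onI)
  fix k1 k2 assume k: "k1 \<in> {lo<..<hi}" "k2 \<in> {lo<..<hi}"
    and eq: "line_point r P0 (row_crossing k1) = line_point r P0 (row_crossing k2)"
  from row_points_eq[OF eq] show "k1 = k2"
  proof (elim disjE exE conjE)
    fix j assume "k1 - k2 = a * j" "even j"
    moreover have "\<bar>a * j\<bar> < 2 * a" using \<open>k1 - k2 = a * j\<close> k width by auto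
    ultimately have "j = 0" using even_mult_eq_0_if_small[OF a_pos] by blast
    then show ?thesis using \<open>k1 - k2 = a * j\<close> by simp
  next
    fix t assume "k1 + k2 = 2 * t" "row_crossing t \<in> lattice_crossings r P0"
    moreover have "lo < t" "t < hi" using \<open>k1 + k2 = 2 * t\<close> k by auto
    ultimately show ?thesis using no_lattice by blast
  qed
qed

lemma inj_on_column_points:
  assumes width: "hi - lo \<le> 2 * b + 1"
    and no_lattice: "\<And>t. lo < t \<Longrightarrow> t < hi \<Longrightarrow> of_int t \<notin> lattice_crossings r P0"
  shows "inj_on (\<lambda>n. line_point r P0 (of_int n)) {lo<..<hi}"
proof (rule inj_onI)
  fix n1 n2 assume n: "n1 \<in> {lo<..<hi}" "n2 \<in> {lo<..<hi}"
    and eq: "line_point r P0 (of_int n1) = line_point r P0 (of_int n2)"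
  from column_points_eq[OF eq] show "n1 = n2"
  proof (elim disjE exE conjE)
    fix j assume "n1 - n2 = b * j" "even j"
    moreover have "\<bar>b * j\<bar> < 2 * b" using \<open>n1 - n2 = b * j\<close> n width by auto
    ultimately have "j = 0" using even_mult_eq_0_if_small[OF b_pos] by blast
    then show ?thesis using \<open>n1 - n2 = b * j\<close> by simp
  next
    fix t assume "n1 + n2 = 2 * t" "of_int t \<in> lattice_crossings r P0"
    moreover have "lo < t" "t < hi" using \<open>n1 + n2 = 2 * t\<close> n by auto
    ultimately show ?thesis using no_lattice by blast
  qed
qed

lemma slope_shift: "r * (x + 2 * of_int (b * j) - P0) = r * (x - P0) + 2 * of_int (a * j)"
  unfolding slope using b_pos by (simp add: field_simps)

lemma line_state_shift: "line_state c s r P0 (x + 2 * of_int (b * j)) = line_state c s r P0 x"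
  unfolding line_state_def line_point_def slope_shift fold_add_even ..

lemma line_point_shift: "line_point r P0 (x + 2 * of_int (b * j)) = line_point r P0 x"
  using line_state_shift[of 1 1 x j] unfolding line_state_def by simp

lemma crossings_shift: "x + 2 * of_int (b * j) \<in> crossings r P0 \<longleftrightarrow> x \<in> crossings r P0"
proof -
  have "2 * of_int (b * j) \<in> \<int>" "2 * of_int (a * j) \<in> (\<int> :: real set)" by simp_all
  then show ?thesis unfolding crossings_def mem_Collect_eq slope_shift by simp
qed

lemma line_point_in_window:
  assumes "x \<in> crossings r P0"
  shows "line_point r P0 x \<in> line_point r P0 ` (crossings r P0 \<inter> {P0..<P0 + 2 * of_int b})"
proof -
  define j where "j = \<lfloor>(x - P0) / (2 * of_int b)\<rfloor>"
  define x' where "x' = x + 2 * of_int (b * - j)"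
  have "of_int j * (2 * of_int b) \<le> x - P0" "x - P0 < (of_int j + 1) * (2 * of_int b)"
    using b_pos unfolding j_def by (simp_all add: floor_divide_lower floor_divide_upper)
  then have "x' \<in> {P0..<P0 + 2 * of_int b}" unfolding x'_def by (simp add: algebra_simps)
  moreover have "x' \<in> crossings r P0" unfolding x'_def using crossings_shift assms by blast
  moreover have "line_point r P0 x' = line_point r P0 x" unfolding x'_def by (rule line_point_shift)
  ultimately show ?thesis by (metis IntI image_eqI)
qed

lemma exists_corner_left_of_start:
  assumes l: "P0 * of_int a = of_int l"
  obtains xa m0 where "r * (of_int xa - P0) = of_int m0" "- b < xa" "xa \<le> 0"
proof -
  obtain u v where uv: "u * a + v * b = 1"
    using bezout_int[of a b] coprime_ab by (auto simp: coprime_iff_gcd_eq_1)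
  define x0 where "x0 = u * l"
  define xa where "xa = - ((- x0) mod b)"
  define m0 where "m0 = a * ((- x0) div b) - v * l"
  have bounds: "- b < xa" "xa \<le> 0" unfolding xa_def using b_pos by simp_all
  have "xa = x0 + (- x0) div b * b" unfolding xa_def using div_mult_mod_eq[of "- x0" b] by linarith
  moreover have "u * a = 1 - v * b" using uv by linarith
  then have "a * x0 = (1 - v * b) * l" unfolding x0_def by (simp flip: \<open>u * a = 1 - v * b\<close>)
  ultimately have eq: "a * xa - l = b * m0" unfolding m0_def by (simp add: algebra_simps)
  have "of_int (a * xa) - P0 * of_int a = (of_int (a * xa - l) :: real)" using l by simp
  also have "\<dots> = of_int b * of_int m0" unfolding eq by simp
  finally have "of_int (a * xa) - P0 * of_int a = of_int b * (of_int m0 :: real)" .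
  then have "r * (of_int xa - P0) = of_int m0" unfolding slope using b_pos by (simp add: field_simps)
  then show ?thesis using that bounds by blast
qed

end

section \<open>Lines through a lattice point\<close>

locale singular_line = rational_line +
  fixes xa m0 :: int
  assumes corner: "r * (of_int xa - P0) = of_int m0"
begin

lemma corner_row_crossing: "of_int xa = row_crossing m0"
  by (rule row_crossing_unique[OF corner])

lemma corner_shift_in_lattice_crossings: "of_int (xa + b * j) \<in> lattice_crossings r P0"
proof -
  have "r * (of_int (xa + b * j) - P0) = r * (of_int xa - P0) + r * (of_int b * of_int j)"
    by (simp add: algebra_simps)
  also have "\<dots> = of_int (m0 + a * j)" using corner b_pos unfolding slope by simp
  finally show ?thesis unfolding lattice_crossings_def by simp
qed

lemma lattice_crossing_form:
  assumes "w \<in> lattice_crossings r P0"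
  obtains j where "w = of_int (xa + b * j)"
proof -
  obtain n m where n: "w = of_int n" and m: "r * (w - P0) = of_int m"
    using assms unfolding lattice_crossings_def by (auto elim!: Ints_cases)
  have "r * (of_int (n - xa)) = of_int (m - m0)" using m corner unfolding n by (simp add: algebra_simps)
  then have "(n - xa) * a = b * (m - m0)"
    unfolding slope using b_pos by (simp add: field_simps flip: of_int_mult of_int_eq_iff)
  then have "b dvd (n - xa) * a" by simp
  then have "b dvd n - xa" using coprime_ab by (simp add: coprime_dvd_mult_left_iff coprime_commute)
  then obtain j where "n = xa + b * j" by (metis add_diff_cancel_left' diff_add_cancel dvdE)
  then show ?thesis using that n by blast
qed

lemma lattice_crossing_outside:
  assumes "w \<in> lattice_crossings r P0"
  shows "w \<le> of_int xa \<or> of_int xa + of_int b \<le> w"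
proof -
  obtain j where j: "w = of_int (xa + b * j)" using lattice_crossing_form[OF assms] .
  have "b * j \<le> 0 \<or> b * 1 \<le> b * j"
    using b_pos mult_nonneg_nonpos[of b j] mult_left_mono[of 1 j b] by linarith
  then have "of_int (xa + b * j) \<le> (of_int xa :: real) \<or> of_int (xa + b) \<le> (of_int (xa + b * j) :: real)"
    by (simp only: of_int_le_iff) linarith
  then show ?thesis unfolding j by simp
qed

definition diagonal :: "(real \<times> real) set" where
  "diagonal = line_point r P0 ` (crossings r P0 \<inter> {of_int xa..of_int xa + of_int b})"

lemma fwd_points_from_before_corner:
  assumes c: "c > 0" "s = c * r" and x0: "x0 \<in> crossings r P0" "of_int xa \<le> x0" "x0 < of_int xa + of_int b"
  shows "fwd_points (line_state c s r P0 x0) = line_point r P0 ` (crossings r P0 \<inter> {x0..of_int xa + of_int b})"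
proof (rule fwd_points_line_state_eq[OF r_pos c x0(1)])
  show "of_int xa + of_int b \<in> lattice_crossings r P0" using corner_shift_in_lattice_crossings[of 1] by simp
  show "\<And>w. w \<in> lattice_crossings r P0 \<Longrightarrow> x0 < w \<Longrightarrow> of_int xa + of_int b \<le> w"
    using lattice_crossing_outside x0 by force
qed (use x0 in simp)

lemma fwd_points_corner:
  "c > 0 \<Longrightarrow> s = c * r \<Longrightarrow> fwd_points (line_state c s r P0 (of_int xa)) = diagonal"
  unfolding diagonal_def
  using fwd_points_from_before_corner[of c s "of_int xa"] corner_shift_in_lattice_crossings[of 0]
    lattice_crossings_subset b_pos by auto

lemma gen_diagonal_diagonal:
  assumes c: "c > 0" and s: "s = c * r"
  shows "gen_diagonal diagonal"
proof -
  have "s > 0" using c s r_pos by simp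
  moreover have "line_state c s r P0 (of_int xa) =
      ((fold_unit (of_int xa), fold_unit (of_int m0)), (fold_sign (of_int xa) * c, fold_sign (of_int m0) * s))"
    unfolding line_state_def line_point_def corner ..
  moreover have "(fold_unit (of_int xa), fold_unit (of_int m0)) \<in> sq_vertices"
    using corner_shift_in_lattice_crossings[of 0] line_point_vertex_iff[of r P0 "of_int xa"]
    unfolding line_point_def corner by simp
  ultimately show ?thesis unfolding gen_diagonal_def
    using fwd_points_corner[OF c s] inward_line_state_of_int[OF c] by metis
qed

lemma diagonal_minus_vertices:
  "diagonal - sq_vertices = line_point r P0 ` (crossings r P0 \<inter> {of_int xa<..<of_int xa + of_int b})"
proof -
  have corners: "of_int xa \<in> lattice_crossings r P0" "of_int xa + of_int b \<in> lattice_crossings r P0"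
    using corner_shift_in_lattice_crossings[of 0] corner_shift_in_lattice_crossings[of 1] by simp_all
  have inner: "x \<notin> lattice_crossings r P0" if "of_int xa < x" "x < of_int xa + of_int b" for x
    using lattice_crossing_outside that by force
  show ?thesis unfolding diagonal_def
    using corners inner by (auto simp: line_point_vertex_iff less_eq_real_def)
qed

lemma inner_not_lattice_crossing:
  "of_int xa < x \<Longrightarrow> x < of_int xa + of_int b \<Longrightarrow> x \<notin> lattice_crossings r P0"
  using lattice_crossing_outside by force

lemma diagonal_AB_CD:
  "{Q \<in> diagonal - sq_vertices. on_AB_CD Q} = (\<lambda>k. line_point r P0 (row_crossing k)) ` {m0<..<m0 + a}"
proof -
  have "{x \<in> crossings r P0 \<inter> {of_int xa<..<of_int xa + of_int b}. r * (x - P0) \<in> \<int>} =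
        row_crossing ` {m0<..<m0 + a}"
  proof (intro equalityI subsetI)
    fix x assume x: "x \<in> {x \<in> crossings r P0 \<inter> {of_int xa<..<of_int xa + of_int b}. r * (x - P0) \<in> \<int>}"
    then obtain k where k: "x = row_crossing k" by (auto elim!: Ints_cases dest: row_crossing_unique)
    then show "x \<in> row_crossing ` {m0<..<m0 + a}"
      using x unfolding corner_row_crossing row_crossing_add_b by auto
  qed (auto simp: row_crossing_in_crossings corner_row_crossing row_crossing_add_b)
  then show ?thesis unfolding diagonal_minus_vertices on_AB_CD_image_line_point by (simp add: image_image)
qed

lemma diagonal_BC_DA:
  "{Q \<in> diagonal - sq_vertices. on_BC_DA Q} = (\<lambda>n. line_point r P0 (of_int n)) ` {xa<..<xa + b}"
proof -
  have "{x \<in> crossings r P0 \<inter> {of_int xa<..<of_int xa + of_int b}. x \<in> \<int>} = of_int ` {xa<..<xa + b}"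
    by (auto elim!: Ints_cases simp: crossings_def)
  then show ?thesis unfolding diagonal_minus_vertices on_BC_DA_image_line_point by (simp add: image_image)
qed

lemma diagonal_counts:
  shows "finite diagonal"
    and "card {Q \<in> diagonal - sq_vertices. on_AB_CD Q} = nat (a - 1)"
    and "card {Q \<in> diagonal - sq_vertices. on_BC_DA Q} = nat (b - 1)"
    and "diag_length diagonal = nat (a + b - 2)"
proof -
  show fin: "finite diagonal" unfolding diagonal_def using finite_crossings_Icc[OF r_pos] by blast
  have "inj_on (\<lambda>k. line_point r P0 (row_crossing k)) {m0<..<m0 + a}"
  proof (rule inj_on_row_points)
    fix t assume "m0 < t" "t < m0 + a"
    then have "of_int xa < row_crossing t" "row_crossing t < of_int xa + of_int b"
      unfolding corner_row_crossing row_crossing_add_b by simp_all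
    then show "row_crossing t \<notin> lattice_crossings r P0" by (rule inner_not_lattice_crossing)
  qed (use a_pos in simp)
  then show AB: "card {Q \<in> diagonal - sq_vertices. on_AB_CD Q} = nat (a - 1)"
    unfolding diagonal_AB_CD by (simp add: card_image)
  have "inj_on (\<lambda>n. line_point r P0 (of_int n)) {xa<..<xa + b}"
  proof (rule inj_on_column_points)
    fix t assume "xa < t" "t < xa + b"
    then have "of_int xa < (of_int t :: real)" "of_int t < (of_int xa + of_int b :: real)" by simp_all
    then show "of_int t \<notin> lattice_crossings r P0" by (rule inner_not_lattice_crossing)
  qed (use b_pos in simp)
  then show BC: "card {Q \<in> diagonal - sq_vertices. on_BC_DA Q} = nat (b - 1)"
    unfolding diagonal_BC_DA by (simp add: card_image)
  let ?A = "{Q \<in> diagonal - sq_vertices. on_AB_CD Q}" and ?B = "{Q \<in> diagonal - sq_vertices. on_BC_DA Q}"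
  have "diagonal - sq_vertices = ?A \<union> ?B" unfolding diagonal_def using crossing_on_side by blast
  from arg_cong[OF this, of card] have "diag_length diagonal = card (?A \<union> ?B)"
    unfolding diag_length_def .
  also have "\<dots> = card ?A + card ?B"
    using fin on_both_sides_imp_vertex by (intro card_Un_disjoint) auto
  finally show "diag_length diagonal = nat (a + b - 2)" using AB BC a_pos b_pos by simp
qed

lemma fwd_points_start_on_diagonal:
  assumes c: "c > 0" "s = c * r" and P0: "of_int xa \<le> P0" "P0 < of_int xa + of_int b"
  shows "fwd_points (line_state c s r P0 P0) \<subseteq> diagonal"
    and "line_point r P0 (of_int xa + of_int b) \<in> fwd_points (line_state c s r P0 P0) \<inter> sq_vertices"
proof -
  have "P0 \<in> crossings r P0" unfolding crossings_def by simp
  from fwd_points_from_before_corner[OF c this P0]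
  have fwd: "fwd_points (line_state c s r P0 P0) = line_point r P0 ` (crossings r P0 \<inter> {P0..of_int xa + of_int b})" .
  show "fwd_points (line_state c s r P0 P0) \<subseteq> diagonal"
    unfolding fwd diagonal_def using P0 by (intro image_mono) auto
  have end_lattice: "of_int xa + of_int b \<in> lattice_crossings r P0"
    using corner_shift_in_lattice_crossings[of 1] by simp
  then have "line_point r P0 (of_int xa + of_int b) \<in> fwd_points (line_state c s r P0 P0)"
    unfolding fwd using lattice_crossings_subset P0 by (intro imageI) auto
  moreover have "line_point r P0 (of_int xa + of_int b) \<in> sq_vertices"
    using end_lattice line_point_vertex_iff by blast
  ultimately show "line_point r P0 (of_int xa + of_int b) \<in> fwd_points (line_state c s r P0 P0) \<inter> sq_vertices"
    by blast
qed

lemma fwd_points_reflected_on_diagonal: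
  assumes c: "c > 0" "s = c * r" and P0: "of_int xa < P0" "P0 < of_int xa + of_int b"
  shows "fwd_points (line_state c s r (2 - P0) (2 - P0)) \<subseteq> diagonal"
proof -
  have "2 - P0 \<in> crossings r (2 - P0)" by (simp add: crossings_reflect crossings_def)
  moreover have "2 - of_int xa \<in> lattice_crossings r (2 - P0)"
    using corner_shift_in_lattice_crossings[of 0] by (simp add: lattice_crossings_reflect)
  moreover have "2 - P0 < 2 - of_int xa" using P0 by simp
  ultimately have "fwd_points (line_state c s r (2 - P0) (2 - P0)) \<subseteq>
      line_point r (2 - P0) ` (crossings r (2 - P0) \<inter> {2 - P0..2 - of_int xa})"
    by (rule fwd_points_line_state_subset[OF r_pos c])
  also have "\<dots> = line_point r P0 ` (crossings r P0 \<inter> {of_int xa..P0})"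
    unfolding image_line_point_reflect by simp
  also have "\<dots> \<subseteq> diagonal"
    unfolding diagonal_def using P0 by (intro image_mono) auto
  finally show ?thesis .
qed

lemma singular_trajectory:
  assumes \<alpha>: "0 < \<alpha>" "\<alpha> < pi / 2" "tan \<alpha> = r"
    and P0: "0 \<le> P0" "P0 < 1" and xa: "- b < xa" "xa \<le> 0"
  shows "traj_points P0 \<alpha> \<inter> sq_vertices \<noteq> {}" and "traj_points P0 \<alpha> \<subseteq> diagonal"
    and "gen_diagonal diagonal"
proof -
  have c: "cos \<alpha> > 0" "sin \<alpha> = cos \<alpha> * r" using \<alpha> cos_gt_zero_pi[of \<alpha>] sin_eq_cos_tan[of \<alpha>] by auto
  show "gen_diagonal diagonal" by (rule gen_diagonal_diagonal[OF c])
  have xa_nonpos: "of_int xa \<le> (0::real)" using xa by simp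
  have "1 \<le> xa + b" using xa by linarith
  then have "(1::real) \<le> of_int xa + of_int b" by (metis of_int_1 of_int_add of_int_le_iff)
  then have P0_end: "P0 < of_int xa + of_int b" using P0 by simp
  note traj = traj_points_line_state[OF P0, where r = r]
  have start: "of_int xa \<le> P0" using xa_nonpos P0 by linarith
  show "traj_points P0 \<alpha> \<inter> sq_vertices \<noteq> {}"
    using fwd_points_start_on_diagonal(2)[OF c start P0_end] unfolding traj by blast
  have "of_int xa < P0" if "P0 \<noteq> 0" using xa_nonpos P0 that by linarith
  then show "traj_points P0 \<alpha> \<subseteq> diagonal"
    using fwd_points_start_on_diagonal(1)[OF c start P0_end] fwd_points_reflected_on_diagonal[OF c _ P0_end]
    unfolding traj by auto
qed

end

section \<open>Lines avoiding the lattice\<close>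

locale periodic_line = rational_line +
  assumes no_lattice: "lattice_crossings r P0 = {}" and P0_nonneg: "0 \<le> P0" and P0_less_1: "P0 < 1"
begin

lemma not_lattice_point: "x \<in> \<int> \<Longrightarrow> r * (x - P0) \<notin> \<int>"
  using no_lattice unfolding lattice_crossings_def by blast

lemma row_crossing_not_int: "row_crossing k \<notin> \<int>"
  using not_lattice_point[of "row_crossing k"] slope_row_crossing[of k] by auto

lemma P0_not_int: "P0 \<notin> \<int>"
  using not_lattice_point[of P0] by auto

lemma P0_pos: "0 < P0"
  using P0_nonneg P0_not_int by (cases "P0 = 0") auto

definition orbit :: "(real \<times> real) set" where
  "orbit = line_point r P0 ` (crossings r P0 \<inter> {P0..<P0 + 2 * of_int b})"

lemma period_window_eq:
  "crossings r P0 \<inter> {P0..<P0 + 2 * of_int b} = row_crossing ` {0..<2 * a} \<union> of_int ` {1..2 * b}"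
proof -
  have "row_crossing 0 = P0" "row_crossing (2 * a) = P0 + 2 * of_int b"
    unfolding row_crossing_def using a_pos by simp_all
  then have rows: "row_crossing k \<in> {P0..<P0 + 2 * of_int b} \<longleftrightarrow> k \<in> {0..<2 * a}" for k
    using row_crossing_le_iff[of 0 k] row_crossing_less_iff[of k "2 * a"] by auto
  have columns: "of_int n \<in> {P0..<P0 + 2 * of_int b} \<longleftrightarrow> n \<in> {1..2 * b}" for n
  proof -
    have "P0 \<le> of_int n \<longleftrightarrow> 1 \<le> n" using P0_pos P0_less_1 by (auto simp: le_floor_iff[symmetric] floor_eq_iff)
    moreover have "of_int n < P0 + 2 * of_int b \<longleftrightarrow> n \<le> 2 * b" using P0_pos P0_less_1 by (auto simp: floor_less_iff[symmetric] floor_eq_iff)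
    ultimately show ?thesis by simp
  qed
  show ?thesis
  proof (intro equalityI subsetI)
    fix x assume x: "x \<in> crossings r P0 \<inter> {P0..<P0 + 2 * of_int b}"
    then have "x \<in> crossings r P0" by simp
    then show "x \<in> row_crossing ` {0..<2 * a} \<union> of_int ` {1..2 * b}"
      by (cases rule: crossings_cases) (use x rows columns in auto)
  next
    fix x assume "x \<in> row_crossing ` {0..<2 * a} \<union> of_int ` {1..2 * b}"
    then consider k where "x = row_crossing k" "k \<in> {0..<2 * a}" | n where "x = of_int n" "n \<in> {1..2 * b}"
      by blast
    then show "x \<in> crossings r P0 \<inter> {P0..<P0 + 2 * of_int b}"
    proof cases
      case 1
      then show ?thesis using rows[of k] row_crossing_in_crossings by simp
    next
      case 2
      then show ?thesis using columns[of n] unfolding crossings_def by simp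
    qed
  qed
qed

lemma card_period_window: "card (crossings r P0 \<inter> {P0..<P0 + 2 * of_int b}) = nat (2 * a + 2 * b)"
proof -
  have "row_crossing k \<noteq> of_int n" for k n
    using row_crossing_not_int[of k] by auto
  then have "row_crossing ` {0..<2 * a} \<inter> of_int ` {1..2 * b} = {}" by blast
  moreover have "inj row_crossing" by (rule strict_mono_imp_inj_on) (simp add: strict_mono_def)
  ultimately show ?thesis
    unfolding period_window_eq using a_pos b_pos
    by (simp add: card_Un_disjoint card_image inj_on_subset inj_on_def)
qed

lemma orbit_AB_CD: "{Q \<in> orbit. on_AB_CD Q} = (\<lambda>k. line_point r P0 (row_crossing k)) ` {0..<2 * a}"
proof -
  have "{x \<in> crossings r P0 \<inter> {P0..<P0 + 2 * of_int b}. r * (x - P0) \<in> \<int>} = row_crossing ` {0..<2 * a}"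
    unfolding period_window_eq using not_lattice_point by auto
  then show ?thesis unfolding orbit_def on_AB_CD_image_line_point by (simp add: image_image)
qed

lemma orbit_BC_DA: "{Q \<in> orbit. on_BC_DA Q} = (\<lambda>n. line_point r P0 (of_int n)) ` {1..2 * b}"
proof -
  have "{x \<in> crossings r P0 \<inter> {P0..<P0 + 2 * of_int b}. x \<in> \<int>} = of_int ` {1..2 * b}"
    unfolding period_window_eq using row_crossing_not_int by auto
  then show ?thesis unfolding orbit_def on_BC_DA_image_line_point by (simp add: image_image)
qed

lemma orbit_counts:
  shows "finite orbit" and "orbit \<inter> sq_vertices = {}"
    and "card {Q \<in> orbit. on_AB_CD Q} = nat (2 * a)"
    and "card {Q \<in> orbit. on_BC_DA Q} = nat (2 * b)"
    and "card orbit = nat (2 * a + 2 * b)"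
proof -
  show fin: "finite orbit" unfolding orbit_def period_window_eq by simp
  show "orbit \<inter> sq_vertices = {}" unfolding orbit_def using no_lattice line_point_vertex_iff by blast
  have "inj_on (\<lambda>k. line_point r P0 (row_crossing k)) {-1<..<2 * a}"
    by (rule inj_on_row_points) (simp_all add: no_lattice)
  then have "inj_on (\<lambda>k. line_point r P0 (row_crossing k)) {0..<2 * a}" by (rule inj_on_subset) auto
  then show AB: "card {Q \<in> orbit. on_AB_CD Q} = nat (2 * a)" unfolding orbit_AB_CD by (simp add: card_image)
  have "inj_on (\<lambda>n. line_point r P0 (of_int n)) {0<..<2 * b + 1}"
    by (rule inj_on_column_points) (simp_all add: no_lattice)
  then have "inj_on (\<lambda>n. line_point r P0 (of_int n)) {1..2 * b}" by (rule inj_on_subset) auto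
  then show BC: "card {Q \<in> orbit. on_BC_DA Q} = nat (2 * b)" unfolding orbit_BC_DA by (simp add: card_image)
  let ?A = "{Q \<in> orbit. on_AB_CD Q}" and ?B = "{Q \<in> orbit. on_BC_DA Q}"
  have "orbit = ?A \<union> ?B" unfolding orbit_def using crossing_on_side by blast
  from arg_cong[OF this, of card] have "card orbit = card (?A \<union> ?B)" .
  also have "\<dots> = card ?A + card ?B"
    using fin \<open>orbit \<inter> sq_vertices = {}\<close> on_both_sides_imp_vertex by (intro card_Un_disjoint) auto
  finally show "card orbit = nat (2 * a + 2 * b)" using AB BC a_pos b_pos by simp
qed

lemma line_state_periodic:
  assumes c: "c > 0" "s = c * r"
  shows "bstates (line_state c s r P0 P0) (nat (2 * a + 2 * b)) = line_state c s r P0 P0"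
proof -
  have P0_cr: "P0 \<in> crossings r P0" unfolding crossings_def by simp
  moreover have "P0 + 2 * of_int b \<in> crossings r P0" using crossings_shift[of P0 1] P0_cr by simp
  moreover have "P0 \<le> P0 + 2 * of_int b" using b_pos by simp
  ultimately have "crossing_seq r P0 P0 (card (crossings r P0 \<inter> {P0..<P0 + 2 * of_int b})) = P0 + 2 * of_int b"
    by (rule crossing_seq_eq_card[OF r_pos])
  then have "crossing_seq r P0 P0 (nat (2 * a + 2 * b)) = P0 + 2 * of_int b"
    unfolding card_period_window .
  then show ?thesis
    unfolding bstates_line_state[OF c(1) r_pos c(2)] using line_state_shift[of c s P0 1] by simp
qed

lemma fwd_points_subset_orbit:
  assumes c: "c > 0" "s = c * r" and P: "P = P0 \<or> P = 2 - P0"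
  shows "fwd_points (line_state c s r P P) \<subseteq> orbit"
proof -
  have "lattice_crossings r P = {}" "P \<in> crossings r P"
    using P no_lattice lattice_crossings_reflect[of _ r P0] unfolding crossings_def by auto
  then have "fwd_points (line_state c s r P P) = line_point r P ` (crossings r P \<inter> {P..})"
    by (intro fwd_points_line_state_no_lattice[OF r_pos c])
  also have "\<dots> \<subseteq> orbit"
  proof
    fix Q assume "Q \<in> line_point r P ` (crossings r P \<inter> {P..})"
    then obtain x where x: "x \<in> crossings r P" and Q: "Q = line_point r P x" by blast
    from P have "\<exists>y \<in> crossings r P0. Q = line_point r P0 y"
      using x Q line_point_reflect[of r P0 x] crossings_reflect[of x r P0] by auto
    then show "Q \<in> orbit" unfolding orbit_def using line_point_in_window by auto
  qed
  finally show ?thesis .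
qed

lemma traj_points_orbit:
  assumes c: "cos \<alpha> > 0" "sin \<alpha> = cos \<alpha> * r"
  shows "traj_points P0 \<alpha> = orbit"
proof
  show "traj_points P0 \<alpha> \<subseteq> orbit"
    unfolding traj_points_line_state[OF P0_nonneg P0_less_1, where r = r]
    using fwd_points_subset_orbit[OF c] by auto
  have "P0 \<in> crossings r P0" unfolding crossings_def by simp
  then have "fwd_points (line_state (cos \<alpha>) (sin \<alpha>) r P0 P0) = line_point r P0 ` (crossings r P0 \<inter> {P0..})"
    by (intro fwd_points_line_state_no_lattice[OF r_pos c] no_lattice)
  then have "orbit \<subseteq> fwd_points (line_state (cos \<alpha>) (sin \<alpha>) r P0 P0)"
    unfolding orbit_def by auto
  then show "orbit \<subseteq> traj_points P0 \<alpha>"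
    unfolding traj_points_line_state[OF P0_nonneg P0_less_1, where r = r] by auto
qed

lemma periodic_trajectory:
  assumes "0 < \<alpha>" "\<alpha> < pi / 2" "tan \<alpha> = r"
  shows "periodic_orbit P0 \<alpha> (nat (2 * a + 2 * b))"
    and "in_class_C (nat (2 * a + 2 * b)) (nat (2 * a)) P0 \<alpha>"
proof -
  have c: "cos \<alpha> > 0" "sin \<alpha> = cos \<alpha> * r" using assms cos_gt_zero_pi[of \<alpha>] sin_eq_cos_tan[of \<alpha>] by auto
  have "bstates (gen_fwd P0 \<alpha>) (nat (2 * a + 2 * b)) = gen_fwd P0 \<alpha>"
    unfolding gen_fwd_line_state[OF P0_nonneg P0_less_1, where r = r] by (rule line_state_periodic[OF c])
  moreover have "0 < nat (2 * a + 2 * b)" using a_pos b_pos by simp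
  ultimately show periodic: "periodic_orbit P0 \<alpha> (nat (2 * a + 2 * b))"
    unfolding periodic_orbit_def singular_orbit_def traj_points_orbit[OF c] using orbit_counts by blast
  show "in_class_C (nat (2 * a + 2 * b)) (nat (2 * a)) P0 \<alpha>"
    unfolding in_class_C_def traj_points_orbit[OF c] using periodic orbit_counts a_pos b_pos by simp
qed

end

context rational_line
begin

lemma singular_orbit_on_diagonal:
  assumes \<alpha>: "0 < \<alpha>" "\<alpha> < pi / 2" "tan \<alpha> = r" and P0: "0 \<le> P0" "P0 < 1"
    and grid: "P0 * of_int a = of_int l"
  shows "singular_orbit P0 \<alpha> \<and>
    (\<exists>G. gen_diagonal G \<and> traj_points P0 \<alpha> \<subseteq> G \<and> finite G \<and> diag_length G = nat (a + b - 2) \<and>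
       card {Q \<in> G - sq_vertices. on_AB_CD Q} = nat (a - 1) \<and>
       card {Q \<in> G - sq_vertices. on_BC_DA Q} = nat (b - 1))"
proof -
  obtain xa m0 where "r * (of_int xa - P0) = of_int m0" and xa: "- b < xa" "xa \<le> 0"
    using exists_corner_left_of_start[OF grid] .
  then interpret singular_line a b P0 r xa m0 by unfold_locales
  show ?thesis
    using singular_trajectory[OF \<alpha> P0 xa] diagonal_counts unfolding singular_orbit_def by blast
qed

lemma periodic_orbit_in_class:
  assumes \<alpha>: "0 < \<alpha>" "\<alpha> < pi / 2" "tan \<alpha> = r" and P0: "0 \<le> P0" "P0 < 1"
    and off_grid: "\<And>j::int. P0 * of_int a \<noteq> of_int j"
  shows "periodic_orbit P0 \<alpha> (nat (2 * a + 2 * b)) \<and> in_class_C (nat (2 * a + 2 * b)) (nat (2 * a)) P0 \<alpha>"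
proof -
  interpret periodic_line a b P0 r
    using lattice_crossings_empty[OF off_grid] P0 by unfold_locales
  show ?thesis using periodic_trajectory[OF \<alpha>] by blast
qed

end

lemma gcd_eq_2E:
  fixes p q :: nat
  assumes "gcd p q = 2"
  obtains a b where "p = 2 * a" "q = 2 * b" "coprime a b"
proof -
  obtain a b where ab: "p = 2 * a" "q = 2 * b" using assms by (metis dvd_def gcd_dvd1 gcd_dvd2)
  then have "coprime a b" using assms by (simp add: gcd_mult_distrib_nat[symmetric] coprime_iff_gcd_eq_1)
  then show ?thesis using that ab by blast
qed

text \<open>In Isabelle tan (pi / 2) = 0, since cos (pi / 2) = 0 and x / 0 = 0.\<close>

lemma less_pi_half_if_tan_pos:
  assumes "\<alpha> \<le> pi / 2" "tan \<alpha> > 0"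
  shows "\<alpha> < pi / 2"
  using assms by (cases "\<alpha> = pi / 2") (auto simp: tan_def)

lemma start_grid_iff:
  fixes a :: nat
  assumes "a > 0" "0 \<le> P0" "P0 < 1"
  shows "P0 \<in> {2 * real l / real (2 * a) | l. l < a} \<longleftrightarrow> (\<exists>j::int. P0 * of_int a = of_int j)"
proof
  assume "P0 \<in> {2 * real l / real (2 * a) | l. l < a}"
  then obtain l where "P0 = real l / real a" by auto
  then have "P0 * of_int a = of_int (int l)" using assms by simp
  then show "\<exists>j::int. P0 * of_int a = of_int j" by blast
next
  assume "\<exists>j::int. P0 * of_int a = of_int j"
  then obtain j :: int where j: "P0 * real a = of_int j" by auto
  have "0 \<le> P0 * real a" "P0 * real a < real a" using assms by simp_all
  then have "0 \<le> j" "j < int a" using j by linarith+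
  moreover have "P0 = 2 * real (nat j) / real (2 * a)" using j \<open>0 \<le> j\<close> assms by (simp add: field_simps)
  ultimately show "P0 \<in> {2 * real l / real (2 * a) | l. l < a}" by (intro CollectI exI[of _ "nat j"]) auto
qed

theorem mainTheorem10:
  fixes p q :: nat and P0 \<alpha>0 :: real
  assumes "p > 0" and "q > 0" and "gcd p q = 2"
    and "0 < \<alpha>0" and "\<alpha>0 \<le> pi / 2" and "tan \<alpha>0 = real p / real q"
    and "0 \<le> P0" and "P0 < 1"
  shows "(P0 \<in> {2 * real l / real p | l. l < p div 2} \<longrightarrow>
            singular_orbit P0 \<alpha>0 \<and>
            (\<exists>G. gen_diagonal G \<and> traj_points P0 \<alpha>0 \<subseteq> G \<and> finite G \<and>
                 diag_length G = (p + q) div 2 - 2 \<and>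
                 card {P \<in> G - sq_vertices. on_AB_CD P} = p div 2 - 1 \<and>
                 card {P \<in> G - sq_vertices. on_BC_DA P} = q div 2 - 1))
       \<and> (P0 \<notin> {2 * real l / real p | l. l < p div 2} \<longrightarrow>
            periodic_orbit P0 \<alpha>0 (p + q) \<and> in_class_C (p + q) p P0 \<alpha>0)"
proof -
  obtain a b where p: "p = 2 * a" and q: "q = 2 * b" and cop: "coprime a b"
    using \<open>gcd p q = 2\<close> by (rule gcd_eq_2E)
  interpret rational_line "int a" "int b" P0 "real p / real q"
    using assms cop p q by unfold_locales auto
  have \<alpha>0: "0 < \<alpha>0" "\<alpha>0 < pi / 2" "tan \<alpha>0 = real p / real q"
    using assms less_pi_half_if_tan_pos by auto
  have grid: "P0 \<in> {2 * real l / real p | l. l < p div 2} \<longleftrightarrow> (\<exists>j::int. P0 * of_int (int a) = of_int j)"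
    using start_grid_iff[of a P0] assms unfolding p by simp
  have "nat (int a + int b - 2) = (p + q) div 2 - 2" "nat (int a - 1) = p div 2 - 1"
    "nat (int b - 1) = q div 2 - 1" "nat (2 * int a + 2 * int b) = p + q" "nat (2 * int a) = p"
    unfolding p q by auto
  note singular_orbit_on_diagonal[OF \<alpha>0 assms(7,8), unfolded this]
    and periodic_orbit_in_class[OF \<alpha>0 assms(7,8), unfolded this]
  then show ?thesis using grid by blast
qed

end
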